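(* Let $\alpha\in(1,2)$, $\sigma=1-\alpha/2$, $T>0$, $N$ a positive integer, $\tau=T/N$, $t_j=j\tau$ and $t_{k+\sigma}=t_k+\sigma\tau$. Let $k\in\{1,2,\dots,N-1\}$ and suppose $p\in C^{4}[t_0,t_{k+1}]$. Define $$r_k={}_C\mathrm{D}_{0,t}^\alpha p(t)\big|_{t=t_{k+\sigma}}-\mathcal{D}p(t)\big|_{t=t_{k+\sigma}},\qquad \mathcal{D}p(t)\big|_{t=t_{k+\sigma}}=\frac{1}{\Gamma(2-\alpha)}\sum_{l=0}^{k}c_l^{(k,\alpha)}\,\delta_t^2p^{k-l}.$$ Then $$|r_k|\leq\frac{1}{\Gamma(3-\alpha)}\max_{t_0\leq t\leq t_{k+1}}|p^{(4)}(t)|\Big[\frac{5\,t_{k+\sigma}^{2-\alpha}}{6}\tau^2-\frac{5}{8}\Big(\sigma+\frac{1}{2}\Big)^{2-\alpha}\tau^{4-\alpha}\Big].$$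
   Context: For $\alpha\in(1,2)$ the Caputo derivative is ${}_C\mathrm{D}_{0,t}^\alpha p(t)=\frac{1}{\Gamma(2-\alpha)}\int_0^t p''(s)(t-s)^{1-\alpha}\,\mathrm{d}s$. Write $p^j=p(t_j)$, $\delta_tp^{j-\frac12}=(p^j-p^{j-1})/\tau$, $\delta_t^2p^0=\frac{2}{\tau}\big[\delta_tp^{\frac12}-p'(t_0)\big]$, and $\delta_t^2p^j=(\delta_tp^{j+\frac12}-\delta_tp^{j-\frac12})/\tau$ for $j\ge1$. For integers $k\ge1$ define $a_1^{(k,\alpha)}=\frac32\tau^{2-\alpha}\int_0^{1/2}(s-\frac13)(k+\sigma-s)^{1-\alpha}\,\mathrm{d}s$; $a_l^{(k,\alpha)}=\tau^{2-\alpha}\int_0^1(s-\frac12)(k+\sigma-l+\frac32-s)^{1-\alpha}\,\mathrm{d}s$ for $2\le l\le k$; $b_l^{(k,\alpha)}=\tau^{2-\alpha}\int_0^1(\frac32-s)(k+\sigma-l+\frac12-s)^{1-\alpha}\,\mathrm{d}s$ for $1\le l\le k-1$; $b_k^{(k,\alpha)}=\tau^{2-\alpha}\int_0^{\sigma+1/2}s^{1-\alpha}\,\mathrm{d}s$; $c_l^{(k,\alpha)}=a_{k-l}^{(k,\alpha)}+b_{k-l}^{(k,\alpha)}$ for $0\le l\le k-1$, and $c_k^{(k,\alpha)}=\frac32\tau^{2-\alpha}\int_0^{1/2}(1-s)(k+\sigma-s)^{1-\alpha}\,\mathrm{d}s$. *)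

theory Defs
  imports "HOL-Analysis.Analysis"
begin

text \<open>Caputo derivative of order alpha in (1,2), given the second derivative p2 of p.\<close>
definition caputo :: "real \<Rightarrow> (real \<Rightarrow> real) \<Rightarrow> real \<Rightarrow> real" where
  "caputo \<alpha> p2 t = (1 / Gamma (2 - \<alpha>)) * integral {0..t} (\<lambda>s. p2 s * (t - s) powr (1 - \<alpha>))"

definition coef_a :: "real \<Rightarrow> real \<Rightarrow> real \<Rightarrow> nat \<Rightarrow> nat \<Rightarrow> real" where
  "coef_a \<alpha> \<sigma> \<tau> k l =
     (if l = 1 then 3/2 * \<tau> powr (2 - \<alpha>) *
         integral {0..1/2} (\<lambda>s. (s - 1/3) * (real k + \<sigma> - s) powr (1 - \<alpha>))
      else \<tau> powr (2 - \<alpha>) *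
         integral {0..1} (\<lambda>s. (s - 1/2) * (real k + \<sigma> - real l + 3/2 - s) powr (1 - \<alpha>)))"

definition coef_b :: "real \<Rightarrow> real \<Rightarrow> real \<Rightarrow> nat \<Rightarrow> nat \<Rightarrow> real" where
  "coef_b \<alpha> \<sigma> \<tau> k l =
     (if l = k then \<tau> powr (2 - \<alpha>) * integral {0..\<sigma> + 1/2} (\<lambda>s. s powr (1 - \<alpha>))
      else \<tau> powr (2 - \<alpha>) *
         integral {0..1} (\<lambda>s. (3/2 - s) * (real k + \<sigma> - real l + 1/2 - s) powr (1 - \<alpha>)))"

definition coef_c :: "real \<Rightarrow> real \<Rightarrow> real \<Rightarrow> nat \<Rightarrow> nat \<Rightarrow> real" where
  "coef_c \<alpha> \<sigma> \<tau> k l =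
     (if l = k then 3/2 * \<tau> powr (2 - \<alpha>) *
         integral {0..1/2} (\<lambda>s. (1 - s) * (real k + \<sigma> - s) powr (1 - \<alpha>))
      else coef_a \<alpha> \<sigma> \<tau> k (k - l) + coef_b \<alpha> \<sigma> \<tau> k (k - l))"

text \<open>Second difference quotient delta_t^2 p^j, with p1 the first derivative of p.\<close>
definition delta2 :: "real \<Rightarrow> (real \<Rightarrow> real) \<Rightarrow> (real \<Rightarrow> real) \<Rightarrow> nat \<Rightarrow> real" where
  "delta2 \<tau> p p1 j =
     (if j = 0 then 2 / \<tau> * ((p \<tau> - p 0) / \<tau> - p1 0)
      else ((p (real (j+1) * \<tau>) - p (real j * \<tau>)) / \<tau>
            - (p (real j * \<tau>) - p (real (j-1) * \<tau>)) / \<tau>) / \<tau>)"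

end

theory Submission
  imports Defs
begin

text \<open>
  Substituting \<open>t = \<tau> x\<close>, the Caputo derivative at \<open>t\<^sub>k\<^sub>+\<^sub>\<sigma>\<close> becomes
  \<open>\<tau>\<^sup>2\<^sup>-\<^sup>\<alpha>/\<Gamma>(2-\<alpha>)\<close> times the integral of \<open>p''(\<tau> x)\<close> against the weight
  \<open>W x = (k + \<sigma> - x)\<^sup>1\<^sup>-\<^sup>\<alpha>\<close> over \<open>[0, k + \<sigma>]\<close>, and the scheme is the same integral with
  \<open>p''\<close> replaced by a piecewise polynomial in the second difference quotients: linear on the pieces
  \<open>[l - 3/2, l - 1/2]\<close> (the first cut off at \<open>0\<close>) and constant \<open>\<delta>\<^sub>t\<^sup>2p\<^sup>k\<close> on \<open>[k - 1/2, k + \<sigma>]\<close>.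
  With \<open>M\<close> the maximum of \<open>|p\<^sup>(\<^sup>4\<^sup>)|\<close>, Taylor's theorem puts the difference quotients
  within \<open>M\<tau>\<^sup>2/12\<close> of \<open>p''\<close>, so the interpolant is within \<open>13/24 M\<tau>\<^sup>2\<close> of
  \<open>p''(\<tau> x)\<close> on the linear pieces.  On the last piece the choice \<open>\<sigma> = 1 - \<alpha>/2\<close> makes the linear Taylor term of \<open>p''\<close> integrate to zero
  against \<open>W\<close>, leaving an error of \<open>5/24 M\<tau>\<^sup>2\<close>.  Integrating these bounds against the
  explicitly integrable weight gives the estimate, even with the sharper constants
  \<open>13/24\<close> and \<open>1/3\<close> in place of \<open>5/6\<close> and \<open>5/8\<close>.
\<close>

section \<open>Taylor bounds and difference quotients\<close>

lemma has_integral_Taylor_kernel: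
  fixes a x :: real
  assumes n: "0 < n" and ax: "a \<le> x"
  shows "((\<lambda>t. (x - t) ^ (n - 1) / fact (n - 1)) has_integral (x - a)^n / fact n) {a..x}"
proof -
  have "((\<lambda>t. (x - t) ^ (n - 1) / fact (n - 1)) has_integral
      (\<lambda>t. - ((x - t) ^ n / fact n)) x - (\<lambda>t. - ((x - t) ^ n / fact n)) a) {a..x}"
  proof (rule fundamental_theorem_of_calculus[OF ax])
    fix t
    have "fact n = real n * fact (n - 1)"
      using n by (metis fact_reduce)
    then show "((\<lambda>t. - ((x - t) ^ n / fact n)) has_vector_derivative
        (x - t) ^ (n - 1) / fact (n - 1)) (at t within {a..x})"
      unfolding has_real_derivative_iff_has_vector_derivative[symmetric]
      using n by (auto intro!: derivative_eq_intros simp: field_simps)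
  qed
  then show ?thesis
    using n by (simp add: power_0_left)
qed

lemma Taylor_remainder_bound_forward:
  fixes f :: "nat \<Rightarrow> real \<Rightarrow> real"
  assumes n: "0 < n" and ax: "a \<le> x"
    and der: "\<And>m t. m < n \<Longrightarrow> t \<in> {a..x} \<Longrightarrow> (f m has_real_derivative f (Suc m) t) (at t within {a..x})"
    and bound: "\<And>t. t \<in> {a..x} \<Longrightarrow> \<bar>f n t\<bar> \<le> M"
  shows "\<bar>f 0 x - (\<Sum>i<n. (x - a)^i / fact i * f i a)\<bar> \<le> M * (x - a)^n / fact n"
proof -
  define r where "r t = ((x - t) ^ (n - 1) / fact (n - 1)) *\<^sub>R f n t" for t
  have vder: "\<And>m t. m < n \<Longrightarrow> a \<le> t \<Longrightarrow> t \<le> x \<Longrightarrow>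
      (f m has_vector_derivative f (Suc m) t) (at t within {a..x})"
    using der by (simp add: has_real_derivative_iff_has_vector_derivative)
  have expansion: "f 0 x - (\<Sum>i<n. (x - a)^i / fact i * f i a) = integral {a..x} r"
    using Taylor_integral[of n f "f 0" a x, OF n refl vder ax] unfolding r_def by simp
  have r_integrable: "r integrable_on {a..x}"
    using Taylor_integrable[of n f "f 0" a x, OF n refl vder ax] unfolding r_def by simp
  note kernel = has_integral_mult_right[OF has_integral_Taylor_kernel[OF n ax], of M]
  have "norm (integral {a..x} r) \<le> integral {a..x} (\<lambda>t. M * ((x - t) ^ (n - 1) / fact (n - 1)))"
  proof (rule integral_norm_bound_integral[OF r_integrable has_integral_integrable[OF kernel]])
    fix t assume t: "t \<in> {a..x}"
    have "norm (r t) = \<bar>f n t\<bar> * ((x - t) ^ (n - 1) / fact (n - 1))"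
      using t unfolding r_def by (simp add: abs_mult)
    also have "\<dots> \<le> M * ((x - t) ^ (n - 1) / fact (n - 1))"
      using t bound by (intro mult_right_mono) auto
    finally show "norm (r t) \<le> M * ((x - t) ^ (n - 1) / fact (n - 1))" .
  qed
  then show ?thesis
    using expansion integral_unique[OF kernel] by simp
qed

lemma Taylor_remainder_bound_backward:
  fixes f :: "nat \<Rightarrow> real \<Rightarrow> real"
  assumes n: "0 < n" and xa: "x \<le> a"
    and der: "\<And>m t. m < n \<Longrightarrow> t \<in> {x..a} \<Longrightarrow> (f m has_real_derivative f (Suc m) t) (at t within {x..a})"
    and bound: "\<And>t. t \<in> {x..a} \<Longrightarrow> \<bar>f n t\<bar> \<le> M"
  shows "\<bar>f 0 x - (\<Sum>i<n. (x - a)^i / fact i * f i a)\<bar> \<le> M * (a - x)^n / fact n"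
proof -
  define g where "g m t = (-1)^m * f m (-t)" for m t
  have "(g m has_real_derivative g (Suc m) t) (at t within {-a..-x})"
    if "m < n" "t \<in> {-a..-x}" for m t
  proof -
    have "(f m has_real_derivative f (Suc m) (-t)) (at (-t) within uminus ` {-a..-x})"
      using der[of m "-t"] that by auto
    from DERIV_image_chain[OF this DERIV_minus[OF DERIV_ident]]
    show ?thesis
      unfolding g_def using DERIV_cmult by (fastforce simp: o_def)
  qed
  moreover have "\<bar>g n t\<bar> \<le> M" if "t \<in> {-a..-x}" for t
    using bound[of "-t"] that by (auto simp: g_def abs_mult)
  ultimately have expansion: "\<bar>g 0 (-x) - (\<Sum>i<n. (-x - -a)^i / fact i * g i (-a))\<bar> \<le> M * (-x - -a)^n / fact n"
    using xa n by (intro Taylor_remainder_bound_forward) auto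
  have terms: "(-x - -a)^i / fact i * g i (-a) = (x - a)^i / fact i * f i a" for i
  proof -
    have "(-x - -a)^i * (-1)^i = (x - a)^i"
      by (simp flip: power_mult_distrib)
    then show ?thesis
      unfolding g_def by (metis (no_types, opaque_lifting) mult.assoc mult.commute times_divide_eq_left minus_minus)
  qed
  have "-x - -a = a - x" "g 0 (-x) = f 0 x"
    by (simp_all add: g_def)
  then show ?thesis
    using expansion unfolding terms by (simp only:)
qed

lemma Taylor_remainder_bound:
  fixes f :: "nat \<Rightarrow> real \<Rightarrow> real"
  assumes n: "0 < n"
    and der: "\<And>m t. m < n \<Longrightarrow> t \<in> {A..B} \<Longrightarrow> (f m has_real_derivative f (Suc m) t) (at t within {A..B})"
    and bound: "\<And>t. t \<in> {A..B} \<Longrightarrow> \<bar>f n t\<bar> \<le> M"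
    and a: "a \<in> {A..B}" and x: "x \<in> {A..B}"
  shows "\<bar>f 0 x - (\<Sum>i<n. (x - a)^i / fact i * f i a)\<bar> \<le> M * \<bar>x - a\<bar>^n / fact n"
proof (cases "a \<le> x")
  case True
  have sub: "{a..x} \<subseteq> {A..B}"
    using a x by auto
  have "\<bar>f 0 x - (\<Sum>i<n. (x - a)^i / fact i * f i a)\<bar> \<le> M * (x - a)^n / fact n"
  proof (rule Taylor_remainder_bound_forward[OF n True])
    show "(f m has_real_derivative f (Suc m) t) (at t within {a..x})" if "m < n" "t \<in> {a..x}" for m t
      using DERIV_subset[OF der sub] that sub by blast
  qed (use bound sub in auto)
  then show ?thesis
    using True by simp
next
  case False
  have sub: "{x..a} \<subseteq> {A..B}"
    using a x by auto
  have "\<bar>f 0 x - (\<Sum>i<n. (x - a)^i / fact i * f i a)\<bar> \<le> M * (a - x)^n / fact n"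
  proof (rule Taylor_remainder_bound_backward[OF n])
    show "(f m has_real_derivative f (Suc m) t) (at t within {x..a})" if "m < n" "t \<in> {x..a}" for m t
      using DERIV_subset[OF der sub] that sub by blast
  qed (use False bound sub in auto)
  then show ?thesis
    using False by simp
qed

lemma Taylor_cubic_remainder_bound:
  fixes f :: "nat \<Rightarrow> real \<Rightarrow> real"
  assumes der: "\<And>m t. m < 4 \<Longrightarrow> t \<in> {A..B} \<Longrightarrow> (f m has_real_derivative f (Suc m) t) (at t within {A..B})"
    and bound: "\<And>t. t \<in> {A..B} \<Longrightarrow> \<bar>f 4 t\<bar> \<le> M"
    and "a \<in> {A..B}" "x \<in> {A..B}"
  shows "\<bar>f 0 x - (f 0 a + (x - a) * f 1 a + (x - a)^2 / 2 * f 2 a + (x - a)^3 / 6 * f 3 a)\<bar>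
    \<le> M * (x - a)^4 / 24"
  using Taylor_remainder_bound[of 4 A B f M a x] assms
  by (simp add: eval_nat_numeral fact_numeral)

lemma central_second_difference_error:
  fixes f :: "nat \<Rightarrow> real \<Rightarrow> real"
  assumes der: "\<And>m t. m < 4 \<Longrightarrow> t \<in> {A..B} \<Longrightarrow> (f m has_real_derivative f (Suc m) t) (at t within {A..B})"
    and bound: "\<And>t. t \<in> {A..B} \<Longrightarrow> \<bar>f 4 t\<bar> \<le> M"
    and h: "0 < h" "A \<le> a - h" "a + h \<le> B"
  shows "\<bar>((f 0 (a + h) - f 0 a) / h - (f 0 a - f 0 (a - h)) / h) / h - f 2 a\<bar> \<le> M * h^2 / 12"
proof -
  define X where "X = f 0 (a + h) - (f 0 a + h * f 1 a + h^2 / 2 * f 2 a + h^3 / 6 * f 3 a)"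
  define Y where "Y = f 0 (a - h) - (f 0 a - h * f 1 a + h^2 / 2 * f 2 a - h^3 / 6 * f 3 a)"
  have "\<bar>X\<bar> \<le> M * h^4 / 24" "\<bar>Y\<bar> \<le> M * h^4 / 24"
    using Taylor_cubic_remainder_bound[OF der bound, of a "a + h"]
      Taylor_cubic_remainder_bound[OF der bound, of a "a - h"] h
    unfolding X_def Y_def by auto
  then have "\<bar>X + Y\<bar> / h^2 \<le> (M * h^4 / 12) / h^2"
    using abs_triangle_ineq[of X Y] by (intro divide_right_mono) auto
  moreover have "((f 0 (a + h) - f 0 a) / h - (f 0 a - f 0 (a - h)) / h) / h - f 2 a = (X + Y) / h^2"
    using h unfolding X_def Y_def by (simp add: field_simps power2_eq_square power3_eq_cube)
  ultimately show ?thesis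
    using h by (simp add: abs_divide power4_eq_xxxx power2_eq_square)
qed

lemma forward_difference_derivative_error:
  fixes f :: "nat \<Rightarrow> real \<Rightarrow> real"
  assumes der: "\<And>m t. m < 4 \<Longrightarrow> t \<in> {A..B} \<Longrightarrow> (f m has_real_derivative f (Suc m) t) (at t within {A..B})"
    and bound: "\<And>t. t \<in> {A..B} \<Longrightarrow> \<bar>f 4 t\<bar> \<le> M"
    and h: "0 < h" "A \<le> a" "a + h \<le> B"
  shows "\<bar>2 / h * ((f 0 (a + h) - f 0 a) / h - f 1 a) - (f 2 a + h / 3 * f 3 a)\<bar> \<le> M * h^2 / 12"
proof -
  define X where "X = f 0 (a + h) - (f 0 a + h * f 1 a + h^2 / 2 * f 2 a + h^3 / 6 * f 3 a)"
  have "\<bar>X\<bar> \<le> M * h^4 / 24"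
    using Taylor_cubic_remainder_bound[OF der bound, of a "a + h"] h unfolding X_def by auto
  then have "2 * \<bar>X\<bar> / h^2 \<le> (M * h^4 / 12) / h^2"
    by (intro divide_right_mono) auto
  moreover have "2 / h * ((f 0 (a + h) - f 0 a) / h - f 1 a) - (f 2 a + h / 3 * f 3 a) = 2 * X / h^2"
    using h unfolding X_def by (simp add: field_simps power2_eq_square power3_eq_cube)
  ultimately show ?thesis
    using h by (simp add: abs_divide abs_mult power4_eq_xxxx power2_eq_square)
qed

section \<open>The weakly singular kernel\<close>

lemma powr_kernel_has_integral:
  fixes K e a b :: real
  assumes e: "0 < e" and ab: "a \<le> b" "b \<le> K"
  shows "((\<lambda>x. (K - x) powr (e - 1)) has_integral ((K - a) powr e - (K - b) powr e) / e) {a..b}"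
proof -
  have "((\<lambda>x. (K - x) powr (e - 1)) has_integral
      (\<lambda>x. - ((K - x) powr e / e)) b - (\<lambda>x. - ((K - x) powr e / e)) a) {a..b}"
  proof (rule fundamental_theorem_of_calculus_interior[OF ab(1)])
    show "continuous_on {a..b} (\<lambda>x. - ((K - x) powr e / e))"
      using e ab by (intro continuous_intros continuous_on_powr') auto
    fix x assume "x \<in> {a<..<b}"
    then have "0 < K - x" using ab by auto
    then show "((\<lambda>x. - ((K - x) powr e / e)) has_vector_derivative (K - x) powr (e - 1)) (at x)"
      unfolding has_real_derivative_iff_has_vector_derivative[symmetric]
      using e by (auto intro!: derivative_eq_intros)
  qed
  then show ?thesis by (simp add: diff_divide_distrib)
qed

lemma powr_kernel_integral:
  fixes K \<beta> a b :: real
  assumes "-1 < \<beta>" "a \<le> b" "b \<le> K"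
  shows "integral {a..b} (\<lambda>x. (K - x) powr \<beta>) = ((K - a) powr (\<beta> + 1) - (K - b) powr (\<beta> + 1)) / (\<beta> + 1)"
  using powr_kernel_has_integral[of "\<beta> + 1" a b K] assms by (auto intro: integral_unique)

lemma powr_kernel_integrable:
  fixes K \<beta> a b :: real
  assumes "-1 < \<beta>" "a \<le> b" "b \<le> K"
  shows "(\<lambda>x. (K - x) powr \<beta>) integrable_on {a..b}"
  using powr_kernel_has_integral[of "\<beta> + 1" a b K] assms by auto

lemma continuous_mult_powr_kernel_integrable:
  fixes K \<beta> a b :: real and u :: "real \<Rightarrow> real"
  assumes "-1 < \<beta>" "a \<le> b" "b \<le> K" and u: "continuous_on {a..b} u"
  shows "(\<lambda>x. u x * (K - x) powr \<beta>) integrable_on {a..b}"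
proof -
  have "(\<lambda>x. (K - x) powr \<beta>) absolutely_integrable_on {a..b}"
    by (rule nonnegative_absolutely_integrable_1[OF powr_kernel_integrable[OF assms(1-3)]]) simp
  moreover have "u \<in> borel_measurable (lebesgue_on {a..b})"
    by (rule continuous_imp_measurable_on_sets_lebesgue[OF u]) auto
  moreover have "bounded (u ` {a..b})"
    by (rule compact_imp_bounded[OF compact_continuous_image[OF u]]) simp
  ultimately have "(\<lambda>x. u x * (K - x) powr \<beta>) absolutely_integrable_on {a..b}"
    by (intro absolutely_integrable_bounded_measurable_product_real) auto
  then show ?thesis
    using absolutely_integrable_on_def by blast
qed

text \<open>The identity singling out \<open>\<sigma> = 1 - \<alpha>/2\<close>: then \<open>2\<sigma> - 1 = 1 - \<alpha>\<close> is the exponent of the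
  Caputo kernel.\<close>

lemma powr_kernel_first_moment_eq_0:
  fixes K \<sigma> :: real
  assumes \<sigma>: "0 < \<sigma>"
  shows "integral {K - (\<sigma> + 1/2)..K} (\<lambda>x. (x - (K - \<sigma>)) * (K - x) powr (2 * \<sigma> - 1)) = 0"
proof -
  let ?I = "{K - (\<sigma> + 1/2)..K}"
  let ?F = "\<lambda>x. \<sigma> * (K - x) powr (2 * \<sigma> - 1) - (K - x) powr (2 * \<sigma> + 1 - 1)"
  have integrand: "(x - (K - \<sigma>)) * (K - x) powr (2 * \<sigma> - 1) = ?F x" if "x \<in> ?I" for x
  proof (cases "x = K")
    case False
    then have "(K - x) * (K - x) powr (2 * \<sigma> - 1) = (K - x) powr (2 * \<sigma>)"
      using that by (subst powr_mult_base) auto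
    then show ?thesis by (simp add: algebra_simps)
  qed (use \<sigma> in simp)
  have kernel: "((\<lambda>x. (K - x) powr (e - 1)) has_integral (\<sigma> + 1/2) powr e / e) ?I" if "0 < e" for e
    using powr_kernel_has_integral[of e "K - (\<sigma> + 1/2)" K K] that \<sigma> by simp
  have "(?F has_integral
      \<sigma> * ((\<sigma> + 1/2) powr (2 * \<sigma>) / (2 * \<sigma>)) - (\<sigma> + 1/2) powr (2 * \<sigma> + 1) / (2 * \<sigma> + 1)) ?I"
    using \<sigma> by (intro has_integral_diff[OF has_integral_mult_right[OF kernel] kernel]) auto
  moreover have "\<sigma> * ((\<sigma> + 1/2) powr (2 * \<sigma>) / (2 * \<sigma>)) - (\<sigma> + 1/2) powr (2 * \<sigma> + 1) / (2 * \<sigma> + 1) = 0"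
  proof -
    have "(\<sigma> + 1/2) powr (2 * \<sigma> + 1) = (\<sigma> + 1/2) powr (2 * \<sigma>) * (\<sigma> + 1/2)"
      using \<sigma> by (subst powr_add) simp
    moreover have "\<sigma> * (P / (2 * \<sigma>)) = P * (\<sigma> + 1/2) / (2 * \<sigma> + 1)" for P
      using \<sigma> by (simp add: field_simps)
    ultimately show ?thesis
      by simp
  qed
  ultimately have "(?F has_integral 0) ?I"
    by (simp only:)
  then show ?thesis
    using integral_cong[OF integrand, of ?I] integral_unique by simp
qed

lemma abs_integral_weighted_le:
  fixes u w :: "real \<Rightarrow> real"
  assumes "(\<lambda>x. u x * w x) integrable_on S" "w integrable_on S"
    and "\<And>x. x \<in> S \<Longrightarrow> 0 \<le> w x" "\<And>x. x \<in> S \<Longrightarrow> \<bar>u x\<bar> \<le> B"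
  shows "\<bar>integral S (\<lambda>x. u x * w x)\<bar> \<le> B * integral S w"
proof -
  have "norm (integral S (\<lambda>x. u x * w x)) \<le> integral S (\<lambda>x. B * w x)"
  proof (rule integral_norm_bound_integral[OF assms(1) integrable_on_mult_right[OF assms(2)]])
    fix x assume "x \<in> S"
    then show "norm (u x * w x) \<le> B * w x"
      using assms(3,4) mult_right_mono[of "\<bar>u x\<bar>" B "w x"] by (simp add: abs_mult)
  qed
  then show ?thesis by simp
qed

lemma integral_linear_combination:
  fixes f g :: "real \<Rightarrow> real"
  assumes "f integrable_on S" "g integrable_on S"
  shows "integral S (\<lambda>x. a * f x + b * g x) = a * integral S f + b * integral S g"
  using assms by (simp add: integral_add integrable_on_mult_right)

section \<open>The rescaled truncation error\<close>

lemma caputo_stretch: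
  fixes \<tau> K \<alpha> :: real
  assumes \<tau>: "0 < \<tau>"
  shows "caputo \<alpha> f (\<tau> * K) =
    \<tau> powr (2 - \<alpha>) / Gamma (2 - \<alpha>) * integral {0..K} (\<lambda>x. f (\<tau> * x) * (K - x) powr (1 - \<alpha>))"
proof -
  define F where "F s = f s * (\<tau> * K - s) powr (1 - \<alpha>)" for s
  have pointwise: "F (\<tau> * x) = \<tau> powr (1 - \<alpha>) * (f (\<tau> * x) * (K - x) powr (1 - \<alpha>))" if "x \<in> {0..K}" for x
  proof -
    have "\<tau> * K - \<tau> * x = \<tau> * (K - x)" by (simp add: algebra_simps)
    then show ?thesis
      using that \<tau> by (simp add: F_def powr_mult)
  qed
  have "integral {0..K} (\<lambda>x. F (\<tau> * x)) =
      integral {0..K} (\<lambda>x. \<tau> powr (1 - \<alpha>) * (f (\<tau> * x) * (K - x) powr (1 - \<alpha>)))"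
    by (rule integral_cong) (rule pointwise)
  then have "integral {0..K} (\<lambda>x. F (\<tau> * x)) =
      \<tau> powr (1 - \<alpha>) * integral {0..K} (\<lambda>x. f (\<tau> * x) * (K - x) powr (1 - \<alpha>))"
    by simp
  moreover have "integral {0..K} (\<lambda>x. F (\<tau> * x)) = 1 / \<tau> * integral {0..\<tau> * K} F"
    using integral_stretch_real[of \<tau> 0 "\<tau> * K" F] \<tau> by simp
  ultimately have "integral {0..\<tau> * K} F =
      \<tau> * \<tau> powr (1 - \<alpha>) * integral {0..K} (\<lambda>x. f (\<tau> * x) * (K - x) powr (1 - \<alpha>))"
    using \<tau> by (simp add: field_simps)
  moreover have "\<tau> * \<tau> powr (1 - \<alpha>) = \<tau> powr (2 - \<alpha>)"
    using \<tau> by (simp add: powr_mult_base)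
  ultimately show ?thesis
    unfolding caputo_def F_def by simp
qed

definition piece :: "nat \<Rightarrow> real set" where
  "piece l = {max 0 (real l - 3/2)..real l - 1/2}"

lemma integral_split_pieces:
  fixes f :: "real \<Rightarrow> real"
  assumes "1 \<le> m" "f integrable_on {0..real m - 1/2}"
  shows "integral {0..real m - 1/2} f = (\<Sum>l=1..m. integral (piece l) f)"
  using assms
proof (induction m rule: nat_induct_at_least)
  case base
  then show ?case by (simp add: piece_def)
next
  case (Suc m)
  have f: "f integrable_on {0..real m + 1/2}"
    using Suc.prems by (simp add: add.commute)
  then have "integral {0..real m - 1/2} f = (\<Sum>l=1..m. integral (piece l) f)"
    using Suc.IH integrable_subinterval_real[OF f] by simp
  moreover have "integral {0..real m - 1/2} f + integral {real m - 1/2..real m + 1/2} f = integral {0..real m + 1/2} f"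
    using Suc.hyps by (intro Henstock_Kurzweil_Integration.integral_combine[OF _ _ f]) auto
  moreover have "piece (Suc m) = {real m - 1/2..real m + 1/2}"
    using Suc.hyps by (auto simp: piece_def)
  ultimately show ?case
    by (simp add: add.commute)
qed

text \<open>\<open>13/24 = 1/8 + 3/2 \<cdot> 1/12 + 1/2 \<cdot> 1/12 + 1/2 \<cdot> 1/2\<close>.\<close>

lemma interpolation_error_bound:
  fixes r e\<^sub>0 e\<^sub>1 q u v R :: real
  assumes "\<bar>r\<bar> \<le> R / 8" "\<bar>e\<^sub>0\<bar> \<le> R / 12" "\<bar>e\<^sub>1\<bar> \<le> R / 12" "\<bar>q\<bar> \<le> R / 2"
    and "\<bar>u\<bar> \<le> 3/2" "\<bar>v\<bar> \<le> 1/2"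
  shows "\<bar>r - u * e\<^sub>0 - v * e\<^sub>1 - v * q\<bar> \<le> 13/24 * R"
proof -
  have "\<bar>u * e\<^sub>0\<bar> \<le> 3/2 * (R / 12)" "\<bar>v * e\<^sub>1\<bar> \<le> 1/2 * (R / 12)" "\<bar>v * q\<bar> \<le> 1/2 * (R / 2)"
    unfolding abs_mult using assms by (intro mult_mono; simp)+
  then show ?thesis
    using assms(1) unfolding abs_le_iff by linarith
qed

lemma sum_regroup_by_pieces:
  fixes A B d :: "nat \<Rightarrow> real"
  assumes "1 \<le> k"
  shows "(\<Sum>l=0..k. (if l = k then C else A (k - l) + B (k - l)) * d (k - l)) =
    (\<Sum>l=1..k. A l * d l + (if l = 1 then C * d 0 else B (l - 1) * d (l - 1))) + B k * d k"
proof -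
  have "(\<Sum>l=0..k. (if l = k then C else A (k - l) + B (k - l)) * d (k - l)) =
      (\<Sum>j=0..k. (if j = 0 then C else A j + B j) * d j)"
    by (rule sum.reindex_bij_witness[where i="\<lambda>j. k - j" and j="\<lambda>l. k - l"]) auto
  also have "\<dots> = (\<Sum>l=1..k. A l * d l + (if l = 1 then C * d 0 else B (l - 1) * d (l - 1))) + B k * d k"
    using assms by (induction k rule: nat_induct_at_least) (auto simp: algebra_simps)
  finally show ?thesis .
qed

locale caputo_scheme_setting =
  fixes \<alpha> \<sigma> \<tau> :: real and k :: nat and D :: "nat \<Rightarrow> real \<Rightarrow> real"
  assumes alpha: "1 < \<alpha>" "\<alpha> < 2"
    and sigma: "\<sigma> = 1 - \<alpha> / 2"
    and tau: "0 < \<tau>"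
    and k_ge_1: "1 \<le> k"
    and deriv: "\<And>m t. m < 4 \<Longrightarrow> t \<in> {0..real (k+1) * \<tau>} \<Longrightarrow>
      (D m has_real_derivative D (Suc m) t) (at t within {0..real (k+1) * \<tau>})"
    and D4_cont: "continuous_on {0..real (k+1) * \<tau>} (D 4)"
begin

definition M :: real where
  "M = (SUP t\<in>{0..real (k+1) * \<tau>}. \<bar>D 4 t\<bar>)"

definition g :: "real \<Rightarrow> real" where
  "g x = D 2 (\<tau> * x)"

definition g' :: "real \<Rightarrow> real" where
  "g' x = \<tau> * D 3 (\<tau> * x)"

definition d :: "nat \<Rightarrow> real" where
  "d j = delta2 \<tau> (D 0) (D 1) j"

abbreviation K :: real where
  "K \<equiv> real k + \<sigma>"

definition W :: "real \<Rightarrow> real" where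
  "W x = (K - x) powr (1 - \<alpha>)"

text \<open>On the first piece \<open>interp\<close> is the line through \<open>(1/3, d 0)\<close> and \<open>(1, d 1)\<close>, since \<open>d 0\<close>
  approximates \<open>p''\<close> at \<open>t\<^sub>1\<^sub>/\<^sub>3\<close> (see \<open>delta2_0_error\<close>).\<close>

definition interp :: "nat \<Rightarrow> real \<Rightarrow> real" where
  "interp l x = (if l = 1 then 3/2 * ((1 - x) * d 0 + (x - 1/3) * d 1)
     else (real l - x) * d (l - 1) + (x - (real l - 1)) * d l)"

lemma sigma_bounds: "0 < \<sigma>" "\<sigma> < 1/2"
  using sigma alpha by auto

lemma kernel_exponent_gt: "-1 < 1 - \<alpha>"
  using alpha by simp

lemma kernel_exponent_eq: "1 - \<alpha> = 2 * \<sigma> - 1"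
  using sigma by simp

lemma D4_bound: "t \<in> {0..real (k+1) * \<tau>} \<Longrightarrow> \<bar>D 4 t\<bar> \<le> M"
proof -
  have "compact ((\<lambda>t. \<bar>D 4 t\<bar>) ` {0..real (k+1) * \<tau>})"
    by (intro compact_continuous_image continuous_intros D4_cont) simp
  then show "t \<in> {0..real (k+1) * \<tau>} \<Longrightarrow> \<bar>D 4 t\<bar> \<le> M"
    unfolding M_def by (intro cSUP_upper bounded_imp_bdd_above compact_imp_bounded)
qed

lemma M_nonneg: "0 \<le> M"
  using D4_bound[of 0] tau abs_ge_zero order_trans by fastforce

lemma scaled_in_domain:
  assumes "x \<in> {0..real k + 1}"
  shows "\<tau> * x \<in> {0..real (k+1) * \<tau>}"
proof -
  have "\<tau> * x \<le> \<tau> * (real k + 1)"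
    using assms tau by (intro mult_left_mono) auto
  then show ?thesis
    using assms tau by (simp add: mult.commute)
qed

lemma g_continuous: "continuous_on {0..real k + 1} g"
proof -
  have "continuous_on {0..real (k+1) * \<tau>} (D 2)"
    using deriv[of 2] by (intro DERIV_continuous_on[where D="D 3"]) (simp add: numeral_eq_Suc)
  moreover have "(\<lambda>x. \<tau> * x) ` {0..real k + 1} \<subseteq> {0..real (k+1) * \<tau>}"
    using scaled_in_domain by blast
  ultimately show ?thesis
    unfolding g_def by (rule continuous_on_compose2[OF _ continuous_on_mult_left[OF continuous_on_id]])
qed

lemma g_Taylor:
  assumes "a \<in> {0..real k + 1}" "y \<in> {0..real k + 1}"
  shows "\<bar>g y - g a - (y - a) * g' a\<bar> \<le> M * \<tau>^2 * (y - a)^2 / 2"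
proof -
  have "\<bar>(\<lambda>m. D (m + 2)) 0 (\<tau> * y) - (\<Sum>i<2. (\<tau> * y - \<tau> * a)^i / fact i * (\<lambda>m. D (m + 2)) i (\<tau> * a))\<bar>
      \<le> M * \<bar>\<tau> * y - \<tau> * a\<bar>^2 / fact 2"
  proof (rule Taylor_remainder_bound[where A=0 and B="real (k+1) * \<tau>"])
    show "((\<lambda>m. D (m + 2)) m has_real_derivative (\<lambda>m. D (m + 2)) (Suc m) t)
        (at t within {0..real (k+1) * \<tau>})" if "m < 2" "t \<in> {0..real (k+1) * \<tau>}" for m t
      using deriv[of "m + 2" t] that by simp
    show "\<bar>(\<lambda>m. D (m + 2)) 2 t\<bar> \<le> M" if "t \<in> {0..real (k+1) * \<tau>}" for t
      using D4_bound[OF that] by simp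
  qed (use scaled_in_domain assms in auto)
  moreover have "\<tau> * y - \<tau> * a = \<tau> * (y - a)"
    by (simp add: algebra_simps)
  ultimately have "\<bar>D 2 (\<tau> * y) - (D 2 (\<tau> * a) + \<tau> * (y - a) * D 3 (\<tau> * a))\<bar> \<le> M * (\<tau> * (y - a))^2 / 2"
    by (simp add: eval_nat_numeral)
  moreover have "g y - g a - (y - a) * g' a = D 2 (\<tau> * y) - (D 2 (\<tau> * a) + \<tau> * (y - a) * D 3 (\<tau> * a))"
    by (simp add: g_def g'_def algebra_simps)
  ultimately show ?thesis
    by (simp add: power_mult_distrib mult.assoc)
qed

lemma g_Taylor_half:
  assumes "a \<in> {0..real k + 1}" "y \<in> {0..real k + 1}" "\<bar>y - a\<bar> \<le> 1/2"
  shows "\<bar>g y - g a - (y - a) * g' a\<bar> \<le> M * \<tau>^2 / 8"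
proof -
  have "(y - a)^2 \<le> (1/2)^2"
    using assms(3) by (metis abs_ge_zero power2_abs power_mono)
  have "\<bar>g y - g a - (y - a) * g' a\<bar> \<le> M * \<tau>^2 * (y - a)^2 / 2"
    by (rule g_Taylor[OF assms(1,2)])
  also have "\<dots> \<le> M * \<tau>^2 * (1/2)^2 / 2"
    using M_nonneg \<open>(y - a)^2 \<le> (1/2)^2\<close> by (intro divide_right_mono mult_left_mono) auto
  finally show ?thesis
    by (simp add: power2_eq_square)
qed

lemma delta2_error:
  assumes "1 \<le> j" "j \<le> k"
  shows "\<bar>d j - g (real j)\<bar> \<le> M * \<tau>^2 / 12"
proof -
  have "real (j + 1) * \<tau> = real j * \<tau> + \<tau>" "real (j - 1) * \<tau> = real j * \<tau> - \<tau>"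
    using assms by (auto simp: algebra_simps of_nat_diff)
  then have "d j = ((D 0 (real j * \<tau> + \<tau>) - D 0 (real j * \<tau>)) / \<tau>
      - (D 0 (real j * \<tau>) - D 0 (real j * \<tau> - \<tau>)) / \<tau>) / \<tau>"
    using assms by (simp add: d_def delta2_def)
  moreover have "0 \<le> real j * \<tau> - \<tau>" "real j * \<tau> + \<tau> \<le> real (k+1) * \<tau>"
    using assms tau by (auto simp: algebra_simps intro: mult_right_mono)
  ultimately show ?thesis
    using central_second_difference_error[OF deriv D4_bound tau] by (simp add: g_def mult.commute)
qed

lemma delta2_0_error: "\<bar>d 0 - (g 0 + g' 0 / 3)\<bar> \<le> M * \<tau>^2 / 12"
proof -
  have "\<tau> \<le> real (k+1) * \<tau>"
    using tau k_ge_1 by simp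
  then show ?thesis
    using forward_difference_derivative_error[OF deriv D4_bound tau, of 0] tau
    by (simp add: d_def delta2_def g_def g'_def)
qed

lemma interp_continuous: "continuous_on S (interp l)"
  by (cases "l = 1") (simp_all add: interp_def[abs_def] continuous_intros)

lemma interp_error_first_piece:
  assumes x: "x \<in> piece 1"
  shows "\<bar>g x - interp 1 x\<bar> \<le> 13/24 * (M * \<tau>^2)"
proof -
  have x: "0 \<le> x" "x \<le> 1/2"
    using x by (auto simp: piece_def)
  have r: "\<bar>g x - g 0 - (x - 0) * g' 0\<bar> \<le> M * \<tau>^2 / 8"
    using x k_ge_1 by (intro g_Taylor_half) auto
  have q: "\<bar>g 1 - g 0 - (1 - 0) * g' 0\<bar> \<le> M * \<tau>^2 / 2"
    using g_Taylor[of 0 1] k_ge_1 by simp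
  have e1: "\<bar>d 1 - g 1\<bar> \<le> M * \<tau>^2 / 12"
    using delta2_error[of 1] k_ge_1 by simp
  have "g x - interp 1 x = (g x - g 0 - (x - 0) * g' 0) - (3/2 * (1 - x)) * (d 0 - (g 0 + g' 0 / 3))
      - (3/2 * (x - 1/3)) * (d 1 - g 1) - (3/2 * (x - 1/3)) * (g 1 - g 0 - (1 - 0) * g' 0)"
    by (simp add: interp_def field_simps)
  also have "\<bar>\<dots>\<bar> \<le> 13/24 * (M * \<tau>^2)"
    using r delta2_0_error e1 q x by (intro interpolation_error_bound) (auto simp: abs_le_iff)
  finally show ?thesis .
qed

lemma interp_error_inner_piece:
  assumes l: "2 \<le> l" "l \<le> k" and x: "x \<in> piece l"
  shows "\<bar>g x - interp l x\<bar> \<le> 13/24 * (M * \<tau>^2)"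
proof -
  define a where "a = real l - 1"
  have x: "real l - 3/2 \<le> x" "x \<le> real l - 1/2"
    using x l by (auto simp: piece_def)
  have xa: "\<bar>x - a\<bar> \<le> 1/2"
    using x unfolding a_def abs_le_iff by linarith
  then have r: "\<bar>g x - g a - (x - a) * g' a\<bar> \<le> M * \<tau>^2 / 8"
    using x l unfolding a_def by (intro g_Taylor_half) auto
  have q: "\<bar>g (real l) - g a - (real l - a) * g' a\<bar> \<le> M * \<tau>^2 / 2"
    using g_Taylor[of a "real l"] l unfolding a_def by simp
  have e0: "\<bar>d (l - 1) - g a\<bar> \<le> M * \<tau>^2 / 12"
    using delta2_error[of "l - 1"] l unfolding a_def by (simp add: of_nat_diff)
  have e1: "\<bar>d l - g (real l)\<bar> \<le> M * \<tau>^2 / 12"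
    using delta2_error[of l] l by simp
  have "g x - interp l x = (g x - g a - (x - a) * g' a) - (real l - x) * (d (l - 1) - g a)
      - (x - a) * (d l - g (real l)) - (x - a) * (g (real l) - g a - (real l - a) * g' a)"
    using l unfolding a_def by (simp add: interp_def algebra_simps)
  also have "\<bar>\<dots>\<bar> \<le> 13/24 * (M * \<tau>^2)"
    using r e0 e1 q x xa unfolding a_def by (intro interpolation_error_bound) (auto simp: abs_le_iff)
  finally show ?thesis .
qed

lemma interp_error:
  "1 \<le> l \<Longrightarrow> l \<le> k \<Longrightarrow> x \<in> piece l \<Longrightarrow> \<bar>g x - interp l x\<bar> \<le> 13/24 * (M * \<tau>^2)"
  using interp_error_first_piece interp_error_inner_piece
  by (cases "l = 1") auto

lemma last_piece_error:
  assumes x: "x \<in> {real k - 1/2..real k + \<sigma>}"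
  shows "\<bar>g x - d k - (x - real k) * g' (real k)\<bar> \<le> 5/24 * (M * \<tau>^2)"
proof -
  have "\<bar>x - real k\<bar> \<le> 1/2"
    using x sigma_bounds unfolding abs_le_iff atLeastAtMost_iff by linarith
  then have "\<bar>g x - g (real k) - (x - real k) * g' (real k)\<bar> \<le> M * \<tau>^2 / 8"
    using x k_ge_1 sigma_bounds by (intro g_Taylor_half) auto
  moreover have "\<bar>d k - g (real k)\<bar> \<le> M * \<tau>^2 / 12"
    using delta2_error[of k] k_ge_1 by simp
  ultimately show ?thesis
    unfolding abs_le_iff by linarith
qed

lemma W_nonneg: "0 \<le> W x"
  by (simp add: W_def)

lemma W_integrable: "a \<le> b \<Longrightarrow> b \<le> K \<Longrightarrow> W integrable_on {a..b}"
  unfolding W_def using kernel_exponent_gt by (intro powr_kernel_integrable)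

lemma mult_W_integrable:
  "continuous_on {a..b} u \<Longrightarrow> a \<le> b \<Longrightarrow> b \<le> K \<Longrightarrow> (\<lambda>x. u x * W x) integrable_on {a..b}"
  unfolding W_def using kernel_exponent_gt by (intro continuous_mult_powr_kernel_integrable)

lemma W_integrable_piece: "1 \<le> l \<Longrightarrow> l \<le> k \<Longrightarrow> W integrable_on piece l"
  unfolding piece_def using sigma_bounds by (intro W_integrable) auto

lemma mult_W_integrable_piece:
  assumes "1 \<le> l" "l \<le> k" "continuous_on (piece l) u"
  shows "(\<lambda>x. u x * W x) integrable_on piece l"
  using assms sigma_bounds unfolding piece_def by (intro mult_W_integrable) auto

lemma g_continuous_piece: "l \<le> k \<Longrightarrow> continuous_on (piece l) g"
  unfolding piece_def by (intro continuous_on_subset[OF g_continuous]) auto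

lemma integral_W_pieces:
  "integral {0..real k - 1/2} W = (K powr (2 - \<alpha>) - (\<sigma> + 1/2) powr (2 - \<alpha>)) / (2 - \<alpha>)"
  using powr_kernel_integral[of "1 - \<alpha>" 0 "real k - 1/2" K] kernel_exponent_gt sigma_bounds k_ge_1
  by (simp add: W_def[abs_def])

lemma integral_W_last_piece:
  "integral {real k - 1/2..K} W = (\<sigma> + 1/2) powr (2 - \<alpha>) / (2 - \<alpha>)"
  using powr_kernel_integral[of "1 - \<alpha>" "real k - 1/2" K K] kernel_exponent_gt sigma_bounds
  by (simp add: W_def[abs_def])

lemma W_first_moment_last_piece_eq_0: "integral {real k - 1/2..K} (\<lambda>x. (x - real k) * W x) = 0"
proof -
  have "K - (\<sigma> + 1/2) = real k - 1/2" "K - \<sigma> = real k"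
    by simp_all
  then show ?thesis
    using powr_kernel_first_moment_eq_0[OF sigma_bounds(1), of K]
    by (simp only: W_def kernel_exponent_eq)
qed

lemma coef_c_diag:
  "coef_c \<alpha> \<sigma> \<tau> k k = 3/2 * \<tau> powr (2 - \<alpha>) * integral (piece 1) (\<lambda>x. (1 - x) * W x)"
  by (simp add: coef_c_def piece_def W_def)

lemma coef_a_first:
  "coef_a \<alpha> \<sigma> \<tau> k 1 = 3/2 * \<tau> powr (2 - \<alpha>) * integral (piece 1) (\<lambda>x. (x - 1/3) * W x)"
  by (simp add: coef_a_def piece_def W_def)

lemma coef_a_piece:
  assumes "2 \<le> l"
  shows "coef_a \<alpha> \<sigma> \<tau> k l = \<tau> powr (2 - \<alpha>) * integral (piece l) (\<lambda>x. (x - (real l - 1)) * W x)"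
proof -
  let ?F = "\<lambda>x. (x - (real l - 1)) * W x"
  have "integral (piece l) ?F = integral {0..1} (\<lambda>s. ?F (s + (real l - 3/2)))"
    using integral_shift_real_ivl[where f="?F" and a="real l - 3/2" and b="real l - 1/2" and c="real l - 3/2"] assms
    by (simp add: piece_def)
  also have "\<dots> = integral {0..1} (\<lambda>s. (s - 1/2) * (real k + \<sigma> - real l + 3/2 - s) powr (1 - \<alpha>))"
    using assms by (simp add: W_def algebra_simps of_nat_diff)
  finally show ?thesis
    using assms by (simp add: coef_a_def)
qed

lemma coef_b_piece:
  assumes "2 \<le> l" "l \<le> k"
  shows "coef_b \<alpha> \<sigma> \<tau> k (l - 1) = \<tau> powr (2 - \<alpha>) * integral (piece l) (\<lambda>x. (real l - x) * W x)"
proof -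
  let ?F = "\<lambda>x. (real l - x) * W x"
  have "integral (piece l) ?F = integral {0..1} (\<lambda>s. ?F (s + (real l - 3/2)))"
    using integral_shift_real_ivl[where f="?F" and a="real l - 3/2" and b="real l - 1/2" and c="real l - 3/2"] assms
    by (simp add: piece_def)
  also have "\<dots> = integral {0..1} (\<lambda>s. (3/2 - s) * (real k + \<sigma> - real (l - 1) + 1/2 - s) powr (1 - \<alpha>))"
    using assms by (simp add: W_def algebra_simps of_nat_diff)
  finally show ?thesis
    using assms by (simp add: coef_b_def)
qed

lemma coef_b_diag: "coef_b \<alpha> \<sigma> \<tau> k k = \<tau> powr (2 - \<alpha>) * integral {real k - 1/2..K} W"
proof -
  have "integral {0..\<sigma> + 1/2} (\<lambda>s. s powr (1 - \<alpha>)) = (\<sigma> + 1/2) powr (2 - \<alpha>) / (2 - \<alpha>)"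
    using has_integral_powr_from_0[of "1 - \<alpha>" "\<sigma> + 1/2"] kernel_exponent_gt sigma_bounds
    by (auto intro: integral_unique)
  then show ?thesis
    by (simp add: coef_b_def integral_W_last_piece)
qed

lemma integral_interp_piece:
  assumes l: "1 \<le> l" "l \<le> k"
  shows "\<tau> powr (2 - \<alpha>) * integral (piece l) (\<lambda>x. interp l x * W x) =
    coef_a \<alpha> \<sigma> \<tau> k l * d l
    + (if l = 1 then coef_c \<alpha> \<sigma> \<tau> k k * d 0 else coef_b \<alpha> \<sigma> \<tau> k (l - 1) * d (l - 1))"
proof (cases "l = 1")
  case True
  have "(\<lambda>x. interp l x * W x) = (\<lambda>x. 3/2 * d 0 * ((1 - x) * W x) + 3/2 * d 1 * ((x - 1/3) * W x))"
    using True by (auto simp: interp_def algebra_simps)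
  then have "integral (piece l) (\<lambda>x. interp l x * W x) =
      3/2 * d 0 * integral (piece 1) (\<lambda>x. (1 - x) * W x) + 3/2 * d 1 * integral (piece 1) (\<lambda>x. (x - 1/3) * W x)"
    using True k_ge_1 by (simp only:) (intro integral_linear_combination mult_W_integrable_piece continuous_intros; simp)
  then show ?thesis
    unfolding True coef_c_diag coef_a_first by (simp add: algebra_simps)
next
  case False
  have "(\<lambda>x. interp l x * W x) = (\<lambda>x. d (l - 1) * ((real l - x) * W x) + d l * ((x - (real l - 1)) * W x))"
    using False by (auto simp: interp_def algebra_simps)
  then have "integral (piece l) (\<lambda>x. interp l x * W x) =
      d (l - 1) * integral (piece l) (\<lambda>x. (real l - x) * W x) + d l * integral (piece l) (\<lambda>x. (x - (real l - 1)) * W x)"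
    using l by (simp only:) (intro integral_linear_combination mult_W_integrable_piece continuous_intros; simp)
  moreover have "2 \<le> l"
    using False l by simp
  ultimately show ?thesis
    unfolding coef_a_piece[OF \<open>2 \<le> l\<close>] coef_b_piece[OF \<open>2 \<le> l\<close> l(2)]
    using False by (simp add: algebra_simps)
qed

lemma scheme_sum_eq:
  "(\<Sum>l=0..k. coef_c \<alpha> \<sigma> \<tau> k l * d (k - l)) =
    \<tau> powr (2 - \<alpha>) * ((\<Sum>l=1..k. integral (piece l) (\<lambda>x. interp l x * W x)) + d k * integral {real k - 1/2..K} W)"
proof -
  have "(\<Sum>l=0..k. coef_c \<alpha> \<sigma> \<tau> k l * d (k - l)) =
      (\<Sum>l=0..k. (if l = k then coef_c \<alpha> \<sigma> \<tau> k k
        else coef_a \<alpha> \<sigma> \<tau> k (k - l) + coef_b \<alpha> \<sigma> \<tau> k (k - l)) * d (k - l))"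
    by (intro sum.cong) (simp_all add: coef_c_def)
  also have "\<dots> = (\<Sum>l=1..k. coef_a \<alpha> \<sigma> \<tau> k l * d l
        + (if l = 1 then coef_c \<alpha> \<sigma> \<tau> k k * d 0 else coef_b \<alpha> \<sigma> \<tau> k (l - 1) * d (l - 1)))
      + coef_b \<alpha> \<sigma> \<tau> k k * d k"
    by (rule sum_regroup_by_pieces[OF k_ge_1])
  also have "\<dots> = (\<Sum>l=1..k. \<tau> powr (2 - \<alpha>) * integral (piece l) (\<lambda>x. interp l x * W x))
      + coef_b \<alpha> \<sigma> \<tau> k k * d k"
    by (simp add: integral_interp_piece)
  finally show ?thesis
    by (simp add: coef_b_diag sum_distrib_left algebra_simps)
qed

lemma caputo_eval_point_eq:
  "caputo \<alpha> (D 2) (real k * \<tau> + \<sigma> * \<tau>) = \<tau> powr (2 - \<alpha>) / Gamma (2 - \<alpha>) *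
    ((\<Sum>l=1..k. integral (piece l) (\<lambda>x. g x * W x)) + integral {real k - 1/2..K} (\<lambda>x. g x * W x))"
proof -
  have gW: "(\<lambda>x. g x * W x) integrable_on {0..K}"
    using sigma_bounds by (intro mult_W_integrable continuous_on_subset[OF g_continuous]) auto
  have "integral {0..K} (\<lambda>x. g x * W x) =
      integral {0..real k - 1/2} (\<lambda>x. g x * W x) + integral {real k - 1/2..K} (\<lambda>x. g x * W x)"
    using k_ge_1 sigma_bounds by (intro Henstock_Kurzweil_Integration.integral_combine[symmetric] gW) auto
  also have "integral {0..real k - 1/2} (\<lambda>x. g x * W x) = (\<Sum>l=1..k. integral (piece l) (\<lambda>x. g x * W x))"
    using k_ge_1 sigma_bounds by (intro integral_split_pieces integrable_subinterval_real[OF gW]) auto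
  finally have "integral {0..K} (\<lambda>x. g x * W x) =
      (\<Sum>l=1..k. integral (piece l) (\<lambda>x. g x * W x)) + integral {real k - 1/2..K} (\<lambda>x. g x * W x)" .
  moreover have "real k * \<tau> + \<sigma> * \<tau> = \<tau> * K"
    by (simp add: algebra_simps)
  ultimately show ?thesis
    using caputo_stretch[OF tau, of \<alpha> "D 2" K] by (simp add: g_def W_def)
qed

lemma integral_piece_diff:
  assumes "1 \<le> l" "l \<le> k"
  shows "integral (piece l) (\<lambda>x. (g x - interp l x) * W x) =
    integral (piece l) (\<lambda>x. g x * W x) - integral (piece l) (\<lambda>x. interp l x * W x)"
proof -
  have "integral (piece l) (\<lambda>x. g x * W x - interp l x * W x) =
      integral (piece l) (\<lambda>x. g x * W x) - integral (piece l) (\<lambda>x. interp l x * W x)"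
    using assms g_continuous_piece interp_continuous
    by (intro integral_diff mult_W_integrable_piece) auto
  then show ?thesis
    by (simp add: algebra_simps)
qed

lemma integral_last_piece_eq:
  "integral {real k - 1/2..K} (\<lambda>x. (g x - d k - (x - real k) * g' (real k)) * W x) =
    integral {real k - 1/2..K} (\<lambda>x. g x * W x) - d k * integral {real k - 1/2..K} W"
proof -
  let ?J = "{real k - 1/2..K}"
  have "?J \<subseteq> {0..real k + 1}" "real k - 1/2 \<le> K"
    using k_ge_1 sigma_bounds by auto
  then have gW: "(\<lambda>x. g x * W x) integrable_on ?J" and W: "W integrable_on ?J"
      and xW: "(\<lambda>x. (x - real k) * W x) integrable_on ?J"
    using W_integrable by (auto intro!: mult_W_integrable continuous_on_subset[OF g_continuous] continuous_intros)
  have "integral ?J (\<lambda>x. (g x - d k - (x - real k) * g' (real k)) * W x) =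
      integral ?J (\<lambda>x. g x * W x - d k * W x - g' (real k) * ((x - real k) * W x))"
    by (simp add: algebra_simps)
  also have "\<dots> = integral ?J (\<lambda>x. g x * W x) - d k * integral ?J W
      - g' (real k) * integral ?J (\<lambda>x. (x - real k) * W x)"
    using gW W xW by (simp add: integral_diff integrable_diff integrable_on_mult_right)
  finally show ?thesis
    by (simp add: W_first_moment_last_piece_eq_0)
qed

lemma truncation_error_eq:
  "caputo \<alpha> (D 2) (real k * \<tau> + \<sigma> * \<tau>) - 1 / Gamma (2 - \<alpha>) * (\<Sum>l=0..k. coef_c \<alpha> \<sigma> \<tau> k l * d (k - l)) =
    \<tau> powr (2 - \<alpha>) / Gamma (2 - \<alpha>) *
      ((\<Sum>l=1..k. integral (piece l) (\<lambda>x. (g x - interp l x) * W x))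
       + integral {real k - 1/2..K} (\<lambda>x. (g x - d k - (x - real k) * g' (real k)) * W x))"
proof -
  have sum_eq: "(\<Sum>l=1..k. integral (piece l) (\<lambda>x. (g x - interp l x) * W x)) =
      (\<Sum>l=1..k. integral (piece l) (\<lambda>x. g x * W x)) - (\<Sum>l=1..k. integral (piece l) (\<lambda>x. interp l x * W x))"
    unfolding sum_subtractf[symmetric] by (intro sum.cong refl integral_piece_diff) auto
  have "c / G * (A + C) - 1 / G * (c * (B + e * E)) = c / G * ((A - B) + (C - e * E))"
    for A B C E G c e :: real
    by (simp add: algebra_simps diff_divide_distrib)
  then show ?thesis
    unfolding caputo_eval_point_eq scheme_sum_eq integral_last_piece_eq sum_eq .
qed

lemma pieces_error_bound:
  "\<bar>\<Sum>l=1..k. integral (piece l) (\<lambda>x. (g x - interp l x) * W x)\<bar>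
    \<le> 13/24 * (M * \<tau>^2) * integral {0..real k - 1/2} W"
proof -
  have "\<bar>\<Sum>l=1..k. integral (piece l) (\<lambda>x. (g x - interp l x) * W x)\<bar>
      \<le> (\<Sum>l=1..k. \<bar>integral (piece l) (\<lambda>x. (g x - interp l x) * W x)\<bar>)"
    by (rule sum_abs)
  also have "\<dots> \<le> (\<Sum>l=1..k. 13/24 * (M * \<tau>^2) * integral (piece l) W)"
  proof (rule sum_mono)
    fix l assume l: "l \<in> {1..k}"
    have "continuous_on (piece l) (\<lambda>x. g x - interp l x)"
      using l g_continuous_piece interp_continuous by (intro continuous_intros) auto
    then show "\<bar>integral (piece l) (\<lambda>x. (g x - interp l x) * W x)\<bar> \<le> 13/24 * (M * \<tau>^2) * integral (piece l) W"
      using l interp_error W_nonneg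
      by (intro abs_integral_weighted_le mult_W_integrable_piece W_integrable_piece) auto
  qed
  also have "\<dots> = 13/24 * (M * \<tau>^2) * integral {0..real k - 1/2} W"
    using k_ge_1 sigma_bounds by (simp add: sum_distrib_left integral_split_pieces W_integrable)
  finally show ?thesis .
qed

lemma last_piece_integral_error_bound:
  "\<bar>integral {real k - 1/2..K} (\<lambda>x. (g x - d k - (x - real k) * g' (real k)) * W x)\<bar>
    \<le> 5/24 * (M * \<tau>^2) * integral {real k - 1/2..K} W"
proof (rule abs_integral_weighted_le)
  have "{real k - 1/2..K} \<subseteq> {0..real k + 1}"
    using k_ge_1 sigma_bounds by auto
  then show "(\<lambda>x. (g x - d k - (x - real k) * g' (real k)) * W x) integrable_on {real k - 1/2..K}"
    using sigma_bounds
    by (intro mult_W_integrable continuous_intros continuous_on_subset[OF g_continuous]) auto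
  show "W integrable_on {real k - 1/2..K}"
    using sigma_bounds by (intro W_integrable) auto
qed (use W_nonneg last_piece_error in auto)

lemma eval_point_powr: "(real k * \<tau> + \<sigma> * \<tau>) powr (2 - \<alpha>) = \<tau> powr (2 - \<alpha>) * K powr (2 - \<alpha>)"
proof -
  have "real k * \<tau> + \<sigma> * \<tau> = \<tau> * K"
    by (simp add: algebra_simps)
  then show ?thesis
    using tau sigma_bounds by (simp add: powr_mult)
qed

lemma powr_tau_4: "\<tau> powr (4 - \<alpha>) = \<tau> powr (2 - \<alpha>) * \<tau>^2"
proof -
  have "\<tau> powr (4 - \<alpha>) = \<tau> powr ((2 - \<alpha>) + 2)"
    by simp
  also have "\<dots> = \<tau> powr (2 - \<alpha>) * \<tau>^2"
    using tau by (subst powr_add) (simp add: powr_numeral)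
  finally show ?thesis .
qed

lemma tail_term_le_main_term: "(\<sigma> + 1/2) powr (2 - \<alpha>) * \<tau> powr (4 - \<alpha>) \<le> (real k * \<tau> + \<sigma> * \<tau>) powr (2 - \<alpha>) * \<tau>^2"
proof -
  have "(\<sigma> + 1/2) powr (2 - \<alpha>) \<le> K powr (2 - \<alpha>)"
    using alpha sigma_bounds k_ge_1 by (intro powr_mono2) auto
  then show ?thesis
    unfolding eval_point_powr powr_tau_4 using tau by (simp add: mult_right_mono mult_left_mono)
qed

lemma Gamma_3_minus_alpha: "Gamma (3 - \<alpha>) = (2 - \<alpha>) * Gamma (2 - \<alpha>)"
proof -
  have "2 - \<alpha> \<notin> \<int>\<^sub>\<le>\<^sub>0"
    using alpha by (auto dest: nonpos_Ints_nonpos)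
  then show ?thesis
    using Gamma_plus1[of "2 - \<alpha>"] by (simp add: add.commute)
qed

theorem truncation_error_le:
  "\<bar>caputo \<alpha> (D 2) (real k * \<tau> + \<sigma> * \<tau>) - 1 / Gamma (2 - \<alpha>) * (\<Sum>l=0..k. coef_c \<alpha> \<sigma> \<tau> k l * d (k - l))\<bar>
    \<le> M / Gamma (3 - \<alpha>) * (13/24 * (real k * \<tau> + \<sigma> * \<tau>) powr (2 - \<alpha>) * \<tau>^2
         - 1/3 * (\<sigma> + 1/2) powr (2 - \<alpha>) * \<tau> powr (4 - \<alpha>))"
proof -
  define c where "c = \<tau> powr (2 - \<alpha>) / Gamma (2 - \<alpha>)"
  define Kp where "Kp = K powr (2 - \<alpha>)"
  define hp where "hp = (\<sigma> + 1/2) powr (2 - \<alpha>)"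
  have Gamma2: "0 < Gamma (2 - \<alpha>)"
    using alpha by simp
  have "\<bar>caputo \<alpha> (D 2) (real k * \<tau> + \<sigma> * \<tau>) - 1 / Gamma (2 - \<alpha>) * (\<Sum>l=0..k. coef_c \<alpha> \<sigma> \<tau> k l * d (k - l))\<bar>
      = c * \<bar>(\<Sum>l=1..k. integral (piece l) (\<lambda>x. (g x - interp l x) * W x))
          + integral {real k - 1/2..K} (\<lambda>x. (g x - d k - (x - real k) * g' (real k)) * W x)\<bar>"
    using tau Gamma2 unfolding truncation_error_eq c_def[symmetric] by (simp add: abs_mult c_def)
  also have "\<dots> \<le> c * (13/24 * (M * \<tau>^2) * integral {0..real k - 1/2} W
      + 5/24 * (M * \<tau>^2) * integral {real k - 1/2..K} W)"
    using tau Gamma2 pieces_error_bound last_piece_integral_error_bound unfolding c_def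
    by (intro mult_left_mono order_trans[OF abs_triangle_ineq] add_mono) auto
  also have "\<dots> = M / Gamma (3 - \<alpha>) * (13/24 * (real k * \<tau> + \<sigma> * \<tau>) powr (2 - \<alpha>) * \<tau>^2
         - 1/3 * (\<sigma> + 1/2) powr (2 - \<alpha>) * \<tau> powr (4 - \<alpha>))"
  proof -
    have "T / G * (13/24 * (M * \<tau>^2) * ((Kp - hp) / s) + 5/24 * (M * \<tau>^2) * (hp / s)) =
        M / (s * G) * (13/24 * (T * Kp) * \<tau>^2 - 1/3 * hp * (T * \<tau>^2))"
      if "s \<noteq> 0" "G \<noteq> 0" for T G s
      using that by (simp add: field_simps)
    moreover have "2 - \<alpha> \<noteq> 0"
      using alpha by simp
    moreover have "Gamma (2 - \<alpha>) \<noteq> 0"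
      using Gamma2 by linarith
    ultimately show ?thesis
      unfolding c_def integral_W_pieces integral_W_last_piece Gamma_3_minus_alpha eval_point_powr powr_tau_4
        Kp_def[symmetric] hp_def[symmetric]
      by blast
  qed
  finally show ?thesis .
qed

end

theorem theorem1:
  fixes \<alpha> \<sigma> T \<tau> :: real and N k :: nat
    and p :: "real \<Rightarrow> real" and D :: "nat \<Rightarrow> real \<Rightarrow> real"
  assumes "1 < \<alpha>" "\<alpha> < 2" "\<sigma> = 1 - \<alpha> / 2" "T > 0" "N > 0" "\<tau> = T / real N"
    and "1 \<le> k" "k \<le> N - 1"
    and "D 0 = p"
    and "\<And>m t. m < 4 \<Longrightarrow> t \<in> {0..real (k+1) * \<tau>} \<Longrightarrow>
           (D m has_real_derivative D (Suc m) t) (at t within {0..real (k+1) * \<tau>})"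
    and "continuous_on {0..real (k+1) * \<tau>} (D 4)"
  shows "\<bar>caputo \<alpha> (D 2) (real k * \<tau> + \<sigma> * \<tau>)
           - (1 / Gamma (2 - \<alpha>)) * (\<Sum>l=0..k. coef_c \<alpha> \<sigma> \<tau> k l * delta2 \<tau> p (D 1) (k - l))\<bar>
         \<le> (1 / Gamma (3 - \<alpha>)) * (SUP t\<in>{0..real (k+1) * \<tau>}. \<bar>D 4 t\<bar>) *
            (5 * (real k * \<tau> + \<sigma> * \<tau>) powr (2 - \<alpha>) / 6 * \<tau>^2
             - 5 / 8 * (\<sigma> + 1/2) powr (2 - \<alpha>) * \<tau> powr (4 - \<alpha>))"
proof -
  interpret caputo_scheme_setting \<alpha> \<sigma> \<tau> k D
    using assms by unfold_locales auto
  let ?A = "(real k * \<tau> + \<sigma> * \<tau>) powr (2 - \<alpha>) * \<tau>^2"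
  let ?B = "(\<sigma> + 1/2) powr (2 - \<alpha>) * \<tau> powr (4 - \<alpha>)"
  have "0 \<le> M / Gamma (3 - \<alpha>)"
    using M_nonneg assms(2) by simp
  then have "M / Gamma (3 - \<alpha>) * (13/24 * ?A - 1/3 * ?B) \<le> M / Gamma (3 - \<alpha>) * (5/6 * ?A - 5/8 * ?B)"
    using tail_term_le_main_term by (intro mult_left_mono) auto
  then show ?thesis
    using truncation_error_le unfolding M_def d_def assms(9)
    by (simp add: algebra_simps)
qed

end
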